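(* There exists an orthogonal design $OD\big(2^{10};\ 2^6_{(16)}\big)$, i.e. a $2^{10}\times2^{10}$ matrix $X$ with entries in $\{0,\pm z_1,\ldots,\pm z_{16}\}$ such that $XX^{\rm T}=\big(2^6\sum_{i=1}^{16}z_i^2\big)I_{2^{10}}$.
   Context: The notation $u_{(k)}$ in a type means that $u$ is repeated $k$ times. $z_1,\ldots,z_{16}$ are commuting indeterminates. An orthogonal design $OD(m;c_1,\ldots,c_k)$ is an $m\times m$ matrix with entries from $\{0,\pm z_1,\ldots,\pm z_k\}$ satisfying $XX^{\rm T}=(\sum_j c_jz_j^2)I_m$. *)

theory Defs
  imports Complex_Main
begin

text \<open>An entry of an orthogonal design is encoded as a pair (c, t) with
  c \<in> {-1,0,1} and 1 \<le> t \<le> k, standing for the formal entry c * z_t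
  (so c = 0 encodes the zero entry, c = 1 encodes z_t, c = -1 encodes -z_t).\<close>

definition od_entry_val :: "(nat \<Rightarrow> real) \<Rightarrow> int \<times> nat \<Rightarrow> real" where
  "od_entry_val z e = real_of_int (fst e) * z (snd e)"

text \<open>orthogonal_design m cs X: X is an m x m matrix (indices 0..m-1) with entries
  in {0, \<plusminus>z_1, ..., \<plusminus>z_k}, k = length cs, and X X^T = (\<Sum>_j c_j z_j^2) I_m
  as an identity of polynomials in the commuting indeterminates z_1..z_k; this
  polynomial identity is expressed by requiring it for every real assignment of
  the indeterminates (equivalent, since the reals are an infinite field).\<close>

definition orthogonal_design :: "nat \<Rightarrow> nat list \<Rightarrow> (nat \<Rightarrow> nat \<Rightarrow> int \<times> nat) \<Rightarrow> bool" where
  "orthogonal_design m cs X \<longleftrightarrow>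
     (\<forall>i<m. \<forall>j<m. fst (X i j) \<in> {-1, 0, 1} \<and> snd (X i j) \<in> {1..length cs}) \<and>
     (\<forall>z :: nat \<Rightarrow> real. \<forall>i<m. \<forall>j<m.
        (\<Sum>l<m. od_entry_val z (X i l) * od_entry_val z (X j l)) =
        (if i = j then (\<Sum>t\<in>{1..length cs}. real (cs ! (t - 1)) * (z t)\<^sup>2) else 0))"

end

theory Submission
  imports Defs "HOL-Library.Disjoint_Sets"
begin

text \<open>Index rows and columns by pairs (i1, i2) with i1 < 2^n and i2 < 2^m (here n = 4, m = 6).
  The variable z_(a+1) occupies the blocks (i1, j1) with i1 XOR j1 = a, each filled with a
  signed Sylvester Hadamard matrix of order 2^m whose rows are permuted by XOR with xi a and
  signed by the Walsh character of zeta a; hence every variable contributes 2^m I to X X^T.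
  In the inner product of two rows from different block rows i1 \<noteq> k1, the contribution of
  column block l1 and that of l1 XOR i1 XOR k1 involve the same two variables in swapped roles.
  Block signs are Walsh characters and beta is linear, so the shift multiplies the signs by a
  single character; a finite sign condition on the tables (anti_amicable, checked by
  evaluation) then makes the two contributions cancel.\<close>

unbundle bit_operations_syntax

text \<open>walsh n x y = (-1)^k, where k is the number of common 1-bits of x and y among the
  lowest n bits: the (x, y) entry of the Sylvester Hadamard matrix of order 2^n.\<close>

fun walsh :: "nat \<Rightarrow> nat \<Rightarrow> nat \<Rightarrow> int" where
  "walsh 0 x y = 1"
| "walsh (Suc n) x y = (if odd x \<and> odd y then -1 else 1) * walsh n (x div 2) (y div 2)"

lemma xor_less_power: "(x::nat) < 2 ^ n \<Longrightarrow> y < 2 ^ n \<Longrightarrow> x XOR y < 2 ^ n"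
  by (metis take_bit_nat_eq_self_iff take_bit_xor)

lemma xor_left_self_nat [simp]: "(x::nat) XOR (x XOR y) = y"
  by (simp add: xor.assoc[symmetric])

lemma xor_right_cancel_nat [simp]: "(x::nat) XOR z = y XOR z \<longleftrightarrow> x = y"
  by (metis xor.assoc xor.right_neutral xor_self_eq)

lemma xor_eq_0_iff_nat: "(x::nat) XOR y = 0 \<longleftrightarrow> x = y"
  by (metis xor.assoc xor.left_neutral xor_self_eq)

lemma walsh_commute: "walsh n x y = walsh n y x"
  by (induction n arbitrary: x y) auto

lemma walsh_xor_left: "walsh n (x XOR x') y = walsh n x y * walsh n x' y"
proof (induction n arbitrary: x x' y)
  case (Suc n)
  have "(x XOR x') div 2 = x div 2 XOR x' div 2"
    using xor_rec[of x x'] by simp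
  then show ?case
    by (simp add: Suc even_xor_iff)
qed simp

lemma walsh_xor_right: "walsh n x (y XOR y') = walsh n x y * walsh n x y'"
  by (metis walsh_commute walsh_xor_left)

lemma walsh_mult_self: "walsh n x y * walsh n x y = 1"
  by (induction n arbitrary: x y) auto

lemma walsh_cases: "walsh n x y = 1 \<or> walsh n x y = -1"
  by (induction n arbitrary: x y) auto

lemma sum_walsh:
  "c < 2 ^ n \<Longrightarrow> (\<Sum>y<2 ^ n. walsh n c y) = (if c = 0 then 2 ^ n else 0)"
proof (induction n arbitrary: c)
  case (Suc n)
  define s where "s = (if odd c then -1 else 1 :: int)"
  have "(\<Sum>y<2 ^ Suc n. walsh (Suc n) c y) = (\<Sum>y<2 ^ n. \<Sum>l\<in>{y * 2..<y * 2 + 2}. walsh (Suc n) c l)"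
    using sum.nat_group[of "walsh (Suc n) c" 2 "2 ^ n"] by (simp add: mult.commute)
  also have "\<dots> = (\<Sum>y<2 ^ n. (1 + s) * walsh n (c div 2) y)"
  proof (rule sum.cong[OF refl])
    fix y :: nat
    have "{y * 2..<y * 2 + 2} = {2 * y, 2 * y + 1}" by auto
    then show "(\<Sum>l\<in>{y * 2..<y * 2 + 2}. walsh (Suc n) c l) = (1 + s) * walsh n (c div 2) y"
      by (simp add: s_def algebra_simps)
  qed
  also have "\<dots> = (1 + s) * (\<Sum>y<2 ^ n. walsh n (c div 2) y)"
    by (simp add: sum_distrib_left)
  also have "\<dots> = (if c = 0 then 2 ^ Suc n else 0)"
    using Suc.prems Suc.IH[of "c div 2"] by (auto simp: s_def)
  finally show ?case .
qed simp

lemma sum_walsh_mult: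
  assumes "p < 2 ^ n" "q < 2 ^ n"
  shows "(\<Sum>y<2 ^ n. walsh n p y * walsh n q y) = (if p = q then 2 ^ n else 0)"
  using sum_walsh[OF xor_less_power[OF assms]]
  by (simp add: walsh_xor_left xor_eq_0_iff_nat)

locale xor_design =
  fixes n m :: nat and zeta xi beta lam :: "nat \<Rightarrow> nat"
  assumes xi_less: "a < 2 ^ n \<Longrightarrow> xi a < 2 ^ m"
    and beta_xor: "l < 2 ^ n \<Longrightarrow> u < 2 ^ n \<Longrightarrow> beta (l XOR u) = beta l XOR beta u"
    and anti_amicable: "\<lbrakk>a < 2 ^ n; b < 2 ^ n; a \<noteq> b\<rbrakk> \<Longrightarrow>
      walsh n (a XOR b) (beta (a XOR b) XOR lam a XOR lam b) * walsh m (zeta a) (xi a XOR xi b)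
        = - walsh m (zeta b) (xi a XOR xi b)"
begin

definition block_sign :: "nat \<Rightarrow> nat \<Rightarrow> int" where
  "block_sign i j = walsh n i (beta j XOR lam (i XOR j))"

definition design :: "nat \<Rightarrow> nat \<Rightarrow> int \<times> nat" where
  "design i j =
    (let i1 = i div 2 ^ m; i2 = i mod 2 ^ m; j1 = j div 2 ^ m; j2 = j mod 2 ^ m; a = i1 XOR j1
     in (block_sign i1 j1 * walsh m (zeta a) i2 * walsh m (i2 XOR xi a) j2, a + 1))"

lemma design_block:
  assumes "i2 < 2 ^ m" "j2 < 2 ^ m"
  shows "design (2 ^ m * i1 + i2) (2 ^ m * j1 + j2) =
    (block_sign i1 j1 * walsh m (zeta (i1 XOR j1)) i2 * walsh m (i2 XOR xi (i1 XOR j1)) j2,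
     (i1 XOR j1) + 1)"
  using assms by (simp add: design_def Let_def)

lemma design_entry:
  assumes "i < 2 ^ (n + m)" "j < 2 ^ (n + m)"
  shows "fst (design i j) \<in> {-1, 1} \<and> snd (design i j) \<in> {1..2 ^ n}"
proof -
  have "i div 2 ^ m < 2 ^ n" "j div 2 ^ m < 2 ^ n"
    using assms by (simp_all add: less_mult_imp_div_less power_add)
  then have "(i div 2 ^ m) XOR (j div 2 ^ m) < 2 ^ n"
    by (rule xor_less_power)
  moreover have "fst (design i j) \<in> {-1, 1}"
  proof -
    have sign: "u * v \<in> {-1, 1}" if "u \<in> {-1, 1}" "v \<in> {-1, 1}" for u v :: int
      using that by auto
    have "walsh k x y \<in> {-1, 1}" for k x y
      using walsh_cases by auto
    then show ?thesis
      unfolding design_def Let_def block_sign_def fst_conv by (intro sign)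
  qed
  ultimately show ?thesis
    by (simp add: design_def Let_def)
qed

definition block_corr :: "nat \<Rightarrow> nat \<Rightarrow> nat \<Rightarrow> nat \<Rightarrow> int" where
  "block_corr a b x y =
    walsh m (zeta a) x * walsh m (zeta b) y * (if x XOR xi a = y XOR xi b then 1 else 0)"

lemma sum_block_rows_mult:
  assumes "a < 2 ^ n" "b < 2 ^ n" "x < 2 ^ m" "y < 2 ^ m"
  shows "(\<Sum>l<2 ^ m. (walsh m (zeta a) x * walsh m (x XOR xi a) l)
            * (walsh m (zeta b) y * walsh m (y XOR xi b) l)) = 2 ^ m * block_corr a b x y"
proof -
  have "x XOR xi a < 2 ^ m" "y XOR xi b < 2 ^ m"
    using assms by (simp_all add: xi_less xor_less_power)
  then have "(\<Sum>l<2 ^ m. walsh m (x XOR xi a) l * walsh m (y XOR xi b) l)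
      = (if x XOR xi a = y XOR xi b then 2 ^ m else 0)"
    by (rule sum_walsh_mult)
  then show ?thesis
    by (simp add: block_corr_def sum_distrib_left[symmetric] algebra_simps)
qed

definition block_term :: "(nat \<Rightarrow> real) \<Rightarrow> nat \<Rightarrow> nat \<Rightarrow> nat \<Rightarrow> nat \<Rightarrow> nat \<Rightarrow> real" where
  "block_term z i1 i2 k1 k2 l1 =
    of_int (block_sign i1 l1 * block_sign k1 l1 * block_corr (i1 XOR l1) (k1 XOR l1) i2 k2)
      * z ((i1 XOR l1) + 1) * z ((k1 XOR l1) + 1)"

lemma sum_design_rows_mult:
  assumes "i1 < 2 ^ n" "k1 < 2 ^ n" "i2 < 2 ^ m" "k2 < 2 ^ m"
  shows "(\<Sum>l<2 ^ (n + m). od_entry_val z (design (2 ^ m * i1 + i2) l)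
                           * od_entry_val z (design (2 ^ m * k1 + k2) l))
       = 2 ^ m * (\<Sum>l1<2 ^ n. block_term z i1 i2 k1 k2 l1)"
proof -
  let ?F = "\<lambda>l. od_entry_val z (design (2 ^ m * i1 + i2) l) * od_entry_val z (design (2 ^ m * k1 + k2) l)"
  have "(\<Sum>l<2 ^ (n + m). ?F l) = (\<Sum>l1<2 ^ n. \<Sum>l\<in>{l1 * 2 ^ m..<l1 * 2 ^ m + 2 ^ m}. ?F l)"
    using sum.nat_group[of ?F "2 ^ m" "2 ^ n"] by (simp add: power_add)
  also have "\<dots> = (\<Sum>l1<2 ^ n. 2 ^ m * block_term z i1 i2 k1 k2 l1)"
  proof (rule sum.cong[OF refl])
    fix l1 assume "l1 \<in> {..<2 ^ n :: nat}"
    then have a: "i1 XOR l1 < 2 ^ n" and b: "k1 XOR l1 < 2 ^ n"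
      using assms by (simp_all add: xor_less_power)
    have "(\<Sum>l\<in>{l1 * 2 ^ m..<l1 * 2 ^ m + 2 ^ m}. ?F l) = (\<Sum>l2<2 ^ m. ?F (2 ^ m * l1 + l2))"
      using sum.shift_bounds_nat_ivl[of ?F 0 "l1 * 2 ^ m" "2 ^ m"]
      by (simp add: lessThan_atLeast0 ac_simps)
    also have "\<dots> = (\<Sum>l2<2 ^ m. of_int (block_sign i1 l1 * block_sign k1 l1)
        * z ((i1 XOR l1) + 1) * z ((k1 XOR l1) + 1)
        * of_int ((walsh m (zeta (i1 XOR l1)) i2 * walsh m (i2 XOR xi (i1 XOR l1)) l2)
                * (walsh m (zeta (k1 XOR l1)) k2 * walsh m (k2 XOR xi (k1 XOR l1)) l2)))"
      using assms by (intro sum.cong) (simp_all add: design_block od_entry_val_def)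
    also have "\<dots> = of_int (block_sign i1 l1 * block_sign k1 l1)
        * z ((i1 XOR l1) + 1) * z ((k1 XOR l1) + 1)
        * of_int (\<Sum>l2<2 ^ m. (walsh m (zeta (i1 XOR l1)) i2 * walsh m (i2 XOR xi (i1 XOR l1)) l2)
                * (walsh m (zeta (k1 XOR l1)) k2 * walsh m (k2 XOR xi (k1 XOR l1)) l2))"
      by (simp only: of_int_sum sum_distrib_left)
    also have "\<dots> = 2 ^ m * block_term z i1 i2 k1 k2 l1"
      by (simp only: sum_block_rows_mult[OF a b assms(3,4)]) (simp add: block_term_def)
    finally show "(\<Sum>l\<in>{l1 * 2 ^ m..<l1 * 2 ^ m + 2 ^ m}. ?F l) = 2 ^ m * block_term z i1 i2 k1 k2 l1" .
  qed
  finally show ?thesis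
    by (simp add: sum_distrib_left)
qed

lemma block_term_diag: "block_term z i1 i2 i1 i2 l1 = (z ((i1 XOR l1) + 1))\<^sup>2"
proof -
  have "block_sign i1 l1 * block_sign i1 l1 * block_corr (i1 XOR l1) (i1 XOR l1) i2 i2 = 1"
    by (simp add: block_sign_def block_corr_def walsh_mult_self)
  then show ?thesis
    by (simp add: block_term_def power2_eq_square)
qed

lemma block_term_same_block: "i2 \<noteq> k2 \<Longrightarrow> block_term z i1 i2 i1 k2 l1 = 0"
  by (simp add: block_term_def block_corr_def)

lemma sum_block_term_diag:
  assumes "i1 < 2 ^ n"
  shows "(\<Sum>l1<2 ^ n. block_term z i1 i2 i1 i2 l1) = (\<Sum>t\<in>{1..2 ^ n}. (z t)\<^sup>2)"
proof -
  have "(\<Sum>l1<2 ^ n. block_term z i1 i2 i1 i2 l1) = (\<Sum>t<2 ^ n. (z (t + 1))\<^sup>2)"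
    unfolding block_term_diag
    by (rule sum.reindex_bij_witness[where i = "\<lambda>t. i1 XOR t" and j = "\<lambda>l. i1 XOR l"])
      (use assms in \<open>auto simp: xor_less_power\<close>)
  also have "\<dots> = (\<Sum>t\<in>{1..2 ^ n}. (z t)\<^sup>2)"
    by (subst image_Suc_lessThan[symmetric]) (simp add: sum.reindex)
  finally show ?thesis .
qed

lemma block_sign_shift:
  assumes "i1 < 2 ^ n" "k1 < 2 ^ n" "l1 < 2 ^ n"
  defines "a \<equiv> i1 XOR l1" and "b \<equiv> k1 XOR l1"
  shows "block_sign i1 (l1 XOR (a XOR b)) * block_sign k1 (l1 XOR (a XOR b))
       = walsh n (a XOR b) (beta (a XOR b) XOR lam a XOR lam b) * (block_sign i1 l1 * block_sign k1 l1)"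
proof -
  define u where "u = a XOR b"
  define y where "y = beta u XOR lam a XOR lam b"
  have u: "u = i1 XOR k1"
    by (simp add: u_def a_def b_def ac_simps)
  have "u < 2 ^ n"
    using assms by (simp add: u xor_less_power)
  then have beta_shift: "beta (l1 XOR u) = beta l1 XOR beta u"
    using assms(3) by (rule beta_xor[rotated])
  have "block_sign i1 (l1 XOR u) = walsh n i1 y * block_sign i1 l1"
    unfolding block_sign_def beta_shift
    by (simp add: walsh_xor_right[symmetric] y_def u a_def b_def ac_simps)
  moreover have "block_sign k1 (l1 XOR u) = walsh n k1 y * block_sign k1 l1"
    unfolding block_sign_def beta_shift
    by (simp add: walsh_xor_right[symmetric] y_def u a_def b_def ac_simps)
  moreover have "walsh n i1 y * walsh n k1 y = walsh n u y"
    by (simp add: u walsh_xor_left)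
  ultimately show ?thesis
    by (simp add: u_def[symmetric] y_def[symmetric] ac_simps)
qed

lemma block_corr_swap:
  assumes "a < 2 ^ n" "b < 2 ^ n" "a \<noteq> b"
  shows "walsh n (a XOR b) (beta (a XOR b) XOR lam a XOR lam b) * block_corr b a x y
       = - block_corr a b x y"
proof (cases "x XOR xi a = y XOR xi b")
  case False
  then have "x XOR xi b \<noteq> y XOR xi a"
    by (metis xor.assoc xor.commute xor_left_self_nat)
  with False show ?thesis
    by (simp add: block_corr_def)
next
  case True
  define R where "R = walsh n (a XOR b) (beta (a XOR b) XOR lam a XOR lam b)"
  define c where "c = xi a XOR xi b"
  have y: "y = x XOR c"
    using True unfolding c_def by (metis xor.assoc xor_left_self_nat xor.commute)
  then have "x XOR xi b = y XOR xi a"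
    by (simp add: c_def ac_simps)
  then have "R * block_corr b a x y = walsh m (zeta b) x * walsh m (zeta a) x * (R * walsh m (zeta a) c)"
    by (simp add: block_corr_def y walsh_xor_right ac_simps)
  also have "R * walsh m (zeta a) c = - walsh m (zeta b) c"
    unfolding R_def c_def by (rule anti_amicable[OF assms])
  also have "walsh m (zeta b) x * walsh m (zeta a) x * - walsh m (zeta b) c = - block_corr a b x y"
    using True by (simp add: block_corr_def y walsh_xor_right ac_simps)
  finally show ?thesis
    unfolding R_def .
qed

lemma block_term_shift:
  assumes "i1 < 2 ^ n" "k1 < 2 ^ n" "l1 < 2 ^ n" "i1 \<noteq> k1"
  shows "block_term z i1 i2 k1 k2 (l1 XOR (i1 XOR k1)) = - block_term z i1 i2 k1 k2 l1"
proof -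
  define a where "a = i1 XOR l1"
  define b where "b = k1 XOR l1"
  define R where "R = walsh n (a XOR b) (beta (a XOR b) XOR lam a XOR lam b)"
  have ab: "i1 XOR k1 = a XOR b"
    by (simp add: a_def b_def ac_simps)
  have "a < 2 ^ n" "b < 2 ^ n"
    using assms by (simp_all add: a_def b_def xor_less_power)
  moreover have "a \<noteq> b"
    using assms(4) by (simp add: a_def b_def)
  ultimately have swap: "R * block_corr b a i2 k2 = - block_corr a b i2 k2"
    unfolding R_def by (rule block_corr_swap)
  have "i1 XOR (l1 XOR (a XOR b)) = b" "k1 XOR (l1 XOR (a XOR b)) = a"
    by (simp_all add: a_def b_def ac_simps)
  then have "block_term z i1 i2 k1 k2 (l1 XOR (a XOR b))
      = of_int (block_sign i1 (l1 XOR (a XOR b)) * block_sign k1 (l1 XOR (a XOR b))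
          * block_corr b a i2 k2) * z (b + 1) * z (a + 1)"
    by (simp add: block_term_def)
  also have "\<dots> = of_int (block_sign i1 l1 * block_sign k1 l1 * (R * block_corr b a i2 k2))
      * z (a + 1) * z (b + 1)"
    using block_sign_shift[OF assms(1-3)] by (simp add: R_def a_def b_def ac_simps)
  also have "\<dots> = - block_term z i1 i2 k1 k2 l1"
    unfolding block_term_def a_def[symmetric] b_def[symmetric] by (simp add: swap)
  finally show ?thesis
    unfolding ab .
qed

lemma sum_block_term_off_diag:
  assumes "i1 < 2 ^ n" "k1 < 2 ^ n" "i1 \<noteq> k1"
  shows "(\<Sum>l1<2 ^ n. block_term z i1 i2 k1 k2 l1) = 0"
proof (rule sum_involution_eq_0[where h = "\<lambda>l. l XOR (i1 XOR k1)"])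
  fix l1 assume "l1 \<in> {..<2 ^ n :: nat}"
  then show "block_term z i1 i2 k1 k2 (l1 XOR (i1 XOR k1)) + block_term z i1 i2 k1 k2 l1 = 0"
    and "l1 XOR (i1 XOR k1) \<in> {..<2 ^ n}"
    using assms by (simp_all add: block_term_shift xor_less_power)
  show "(l1 XOR (i1 XOR k1)) XOR (i1 XOR k1) = l1"
    by (simp add: xor.assoc)
  show "l1 XOR (i1 XOR k1) \<noteq> l1"
    using assms(3) by (metis xor.right_neutral xor_eq_0_iff_nat xor_left_self_nat)
qed

theorem orthogonal_design_design: "orthogonal_design (2 ^ (n + m)) (replicate (2 ^ n) (2 ^ m)) design"
  unfolding orthogonal_design_def
proof (intro conjI allI impI)
  fix i j :: nat assume "i < 2 ^ (n + m)" "j < 2 ^ (n + m)"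
  then show "fst (design i j) \<in> {-1, 0, 1}"
    and "snd (design i j) \<in> {1..length (replicate (2 ^ n) (2 ^ m :: nat))}"
    using design_entry by auto
next
  fix z :: "nat \<Rightarrow> real" and i k :: nat assume "i < 2 ^ (n + m)" "k < 2 ^ (n + m)"
  define i1 i2 k1 k2 where parts: "i1 = i div 2 ^ m" "i2 = i mod 2 ^ m"
    "k1 = k div 2 ^ m" "k2 = k mod 2 ^ m"
  have i: "i = 2 ^ m * i1 + i2" and k: "k = 2 ^ m * k1 + k2"
    by (simp_all add: parts)
  have bounds: "i1 < 2 ^ n" "k1 < 2 ^ n" "i2 < 2 ^ m" "k2 < 2 ^ m"
    using \<open>i < 2 ^ (n + m)\<close> \<open>k < 2 ^ (n + m)\<close>
    by (simp_all add: parts less_mult_imp_div_less power_add)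
  have weights: "(\<Sum>t\<in>{1..length (replicate (2 ^ n) (2 ^ m :: nat))}.
      real (replicate (2 ^ n) (2 ^ m) ! (t - 1)) * (z t)\<^sup>2) = 2 ^ m * (\<Sum>t\<in>{1..2 ^ n}. (z t)\<^sup>2)"
    by (simp add: sum_distrib_left) (intro sum.cong; auto)
  have same: "i = k \<longleftrightarrow> i1 = k1 \<and> i2 = k2"
    using i k parts by metis
  have "(\<Sum>l1<2 ^ n. block_term z i1 i2 k1 k2 l1) = (if i = k then \<Sum>t\<in>{1..2 ^ n}. (z t)\<^sup>2 else 0)"
    using bounds same
    by (cases "i1 = k1") (auto simp: sum_block_term_diag sum_block_term_off_diag block_term_same_block)
  then show "(\<Sum>l<2 ^ (n + m). od_entry_val z (design i l) * od_entry_val z (design k l)) =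
    (if i = k then \<Sum>t\<in>{1..length (replicate (2 ^ n) (2 ^ m :: nat))}.
        real (replicate (2 ^ n) (2 ^ m) ! (t - 1)) * (z t)\<^sup>2 else 0)"
    unfolding weights i k sum_design_rows_mult[OF bounds] by simp
qed

end

definition zeta_table :: "nat list" where
  "zeta_table = [0, 0, 2, 16, 26, 59, 26, 24, 21, 61, 13, 38, 6, 3, 60, 39]"

definition xi_table :: "nat list" where
  "xi_table = [0, 53, 31, 2, 60, 60, 35, 26, 11, 41, 41, 35, 23, 29, 36, 27]"

definition beta_table :: "nat list" where
  "beta_table = [0, 1, 2, 3, 0, 1, 2, 3, 13, 12, 15, 14, 13, 12, 15, 14]"

definition lam_table :: "nat list" where
  "lam_table = [6, 10, 13, 4, 3, 7, 11, 15, 14, 5, 11, 13, 13, 13, 11, 3]"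

lemma xor_design_tables:
  "xor_design 4 6 ((!) zeta_table) ((!) xi_table) ((!) beta_table) ((!) lam_table)"
proof
  have "list_all (\<lambda>a. xi_table ! a < 2 ^ 6) [0..<2 ^ 4]"
    by code_simp
  then show "a < 2 ^ 4 \<Longrightarrow> xi_table ! a < 2 ^ 6" for a
    by (simp add: list_all_iff)
  have "list_all (\<lambda>l. list_all (\<lambda>u.
      beta_table ! (l XOR u) = beta_table ! l XOR beta_table ! u) [0..<2 ^ 4]) [0..<2 ^ 4]"
    by code_simp
  then show "l < 2 ^ 4 \<Longrightarrow> u < 2 ^ 4 \<Longrightarrow>
      beta_table ! (l XOR u) = beta_table ! l XOR beta_table ! u" for l u
    by (simp add: list_all_iff)
  have "list_all (\<lambda>a. list_all (\<lambda>b. a = b \<or>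
      walsh 4 (a XOR b) (beta_table ! (a XOR b) XOR lam_table ! a XOR lam_table ! b)
        * walsh 6 (zeta_table ! a) (xi_table ! a XOR xi_table ! b)
      = - walsh 6 (zeta_table ! b) (xi_table ! a XOR xi_table ! b)) [0..<2 ^ 4]) [0..<2 ^ 4]"
    by code_simp
  then show "\<lbrakk>a < 2 ^ 4; b < 2 ^ 4; a \<noteq> b\<rbrakk> \<Longrightarrow>
      walsh 4 (a XOR b) (beta_table ! (a XOR b) XOR lam_table ! a XOR lam_table ! b)
        * walsh 6 (zeta_table ! a) (xi_table ! a XOR xi_table ! b)
      = - walsh 6 (zeta_table ! b) (xi_table ! a XOR xi_table ! b)" for a b
    unfolding list_all_iff set_upt by (metis atLeastLessThan_iff zero_le)
qed

theorem theorem5p3: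
  shows "\<exists>X. orthogonal_design (2 ^ 10) (replicate 16 (2 ^ 6)) X"
proof -
  interpret xor_design 4 6 "(!) zeta_table" "(!) xi_table" "(!) beta_table" "(!) lam_table"
    by (rule xor_design_tables)
  show ?thesis
    using orthogonal_design_design by auto
qed

end
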